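(* Let $r\in\mathbb{N}$ be fixed and let $\chi:\mathbb{R}_+\to\mathbb{R}$ be a kernel (in the sense described in the context). Then for every bounded, locally integrable function $f:\mathbb{R}_+\to\mathbb{R}$, $$\lim_{w\to\infty}\left(E_{w,r}^{\chi}f\right)(x)=f(x)$$ holds at every point $x\in\mathbb{R}_+$ at which $f$ is continuous. Furthermore, if $f\in\mathcal{C}(\mathbb{R}_+)$, then $$\lim_{w\to\infty}\left\|E_{w,r}^{\chi}f-f\right\|_\infty=0.$$
   Context: $\mathbb{R}_+=(0,\infty)$. A kernel is a continuous function $\chi:\mathbb{R}_+\to\mathbb{R}$ such that: (1) $\int_{\mathbb{R}_+}|\chi(x)|\frac{dx}{x}<\infty$ and $\chi$ is bounded on $[1/e,e]$; (2) $\sum_{k\in\mathbb{Z}}\chi(e^{-k}u)=1$ for every $u\in\mathbb{R}_+$, and $M_0(\chi):=\sup_{u\in\mathbb{R}_+}\sum_{k\in\mathbb{Z}}|\chi(e^{-k}u)|<+\infty$; (3) $\lim_{\gamma\to\infty}\sum_{|k-\log u|>\gamma}|\chi(e^{-k}u)|=0$ uniformly with respect to $u\in\mathbb{R}_+$. For $r\in\mathbb{N}$, $w>0$ and a locally integrable $f:\mathbb{R}_+\to\mathbb{R}$, the Mellin–Steklov exponential sampling operator of order $r$ is $$\left(E_{w,r}^{\chi}f\right)(x):=\sum_{k\in\mathbb{Z}}\chi(e^{-k}x^{w})\, w^{r}\int_1^{e^{1/w}}\!\!\cdots\!\int_1^{e^{1/w}}\sum_{m=1}^{r}(-1)^{1-m}\binom{r}{m}f\!\left(e^{k/w}(t_1\cdots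 t_r)^{m/r}\right)\frac{dt_1}{t_1}\cdots\frac{dt_r}{t_r},\quad x\in\mathbb{R}_+.$$ $CB(\mathbb{R}_+)$ is the space of bounded continuous functions on $\mathbb{R}_+$ with sup-norm $\|\cdot\|_\infty$. A function $f$ is log-uniformly continuous on $\mathbb{R}_+$ if for every $\varepsilon>0$ there is $\delta>0$ with $|f(u)-f(v)|<\varepsilon$ whenever $|\log u-\log v|\le\delta$, $u,v\in\mathbb{R}_+$. $\mathcal{C}(\mathbb{R}_+)$ denotes the subspace of $CB(\mathbb{R}_+)$ of log-uniformly continuous functions. *)

theory Defs
  imports "HOL-Analysis.Analysis"
begin

text \<open>Kernel (conditions (1)-(3) of the paper). Functions are of type real => real;
only their values on the positive reals matter.\<close>
definition is_kernel :: "(real \<Rightarrow> real) \<Rightarrow> bool" where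
  "is_kernel K \<longleftrightarrow>
     continuous_on {0<..} K
   \<and> set_integrable lborel {0<..} (\<lambda>x. K x / x)
   \<and> bounded (K ` {exp (-1)..exp 1})
   \<and> (\<forall>u>0. ((\<lambda>k::int. K (exp (- real_of_int k) * u)) has_sum 1) UNIV)
   \<and> (\<exists>M. \<forall>u>0. (\<lambda>k::int. \<bar>K (exp (- real_of_int k) * u)\<bar>) summable_on UNIV
                 \<and> infsum (\<lambda>k::int. \<bar>K (exp (- real_of_int k) * u)\<bar>) UNIV \<le> M)
   \<and> (\<forall>\<epsilon>>0. \<exists>\<gamma>0. \<forall>\<gamma>\<ge>\<gamma>0. \<forall>u>0.
         infsum (\<lambda>k::int. \<bar>K (exp (- real_of_int k) * u)\<bar>) {k::int. \<bar>real_of_int k - ln u\<bar> > \<gamma>} < \<epsilon>)"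

definition locally_integrable_pos :: "(real \<Rightarrow> real) \<Rightarrow> bool" where
  "locally_integrable_pos f \<longleftrightarrow> (\<forall>a b. 0 < a \<longrightarrow> a \<le> b \<longrightarrow> set_integrable lborel {a..b} f)"

definition bounded_pos :: "(real \<Rightarrow> real) \<Rightarrow> bool" where
  "bounded_pos f \<longleftrightarrow> (\<exists>M. \<forall>x>0. \<bar>f x\<bar> \<le> M)"

definition log_uniformly_continuous :: "(real \<Rightarrow> real) \<Rightarrow> bool" where
  "log_uniformly_continuous f \<longleftrightarrow>
     (\<forall>\<epsilon>>0. \<exists>\<delta>>0. \<forall>u>0. \<forall>v>0. \<bar>ln u - ln v\<bar> \<le> \<delta> \<longrightarrow> \<bar>f u - f v\<bar> < \<epsilon>)"

definition C_pos :: "(real \<Rightarrow> real) set" where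
  "C_pos = {f. bounded_pos f \<and> continuous_on {0<..} f \<and> log_uniformly_continuous f}"

definition steklov_mean :: "real \<Rightarrow> nat \<Rightarrow> (real \<Rightarrow> real) \<Rightarrow> int \<Rightarrow> real" where
  "steklov_mean w r f k =
     w ^ r * (\<integral>t \<in> PiE {..<r} (\<lambda>_. {1..exp (1 / w)}).
        (\<Sum>m = 1..r. (-1::real) powi (1 - int m) * real (r choose m) *
            f (exp (real_of_int k / w) * (\<Prod>i<r. t i) powr (real m / real r)))
        / (\<Prod>i<r. t i)
      \<partial>(PiM {..<r} (\<lambda>_. lborel)))"

definition mellin_steklov :: "real \<Rightarrow> nat \<Rightarrow> (real \<Rightarrow> real) \<Rightarrow> (real \<Rightarrow> real) \<Rightarrow> real \<Rightarrow> real" where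
  "mellin_steklov w r K f x =
     infsum (\<lambda>k::int. K (exp (- real_of_int k) * x powr w) * steklov_mean w r f k) UNIV"

end

theory Submission
  imports Defs
begin

(* If f is uniformly close to z on [e^(k/w), e^((k+r)/w)], then so is the Steklov mean of index k, up
   to the factor sum_m |(-1)^(1-m) (r choose m)|: the weights (-1)^(1-m) (r choose m) sum to 1, the
   nodes e^(k/w) (t_1 ... t_r)^(m/r) lie in that interval, and w^r times the integral of
   dt_1/t_1 ... dt_r/t_r over [1, e^(1/w)]^r is 1. As the kernel values chi(e^(-k) x^w) sum to 1,
   E_w f(x) - f(x) is the chi-weighted sum of the deviations of the Steklov means from f(x). Indices
   with |k - w log x| <= gamma give intervals within log-distance (gamma + r)/w of x, which tends to 0;
   the remaining indices carry small kernel mass by condition (3), uniformly in x, and f is bounded.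
   Hence the convergence is uniform on every set of points at which f is log-equicontinuous: a single
   point of continuity, or all of R_+ when f is log-uniformly continuous. *)

lemma integral_inverse_interval:
  fixes a b :: real
  assumes "0 < a" "a \<le> b"
  shows "integrable lborel (\<lambda>s. indicator {a..b} s * (1 / s))"
    and "integral\<^sup>L lborel (\<lambda>s. indicator {a..b} s * (1 / s)) = ln b - ln a"
proof -
  have cont: "continuous_on {a..b} (\<lambda>s::real. 1 / s)"
    using assms by (intro continuous_intros) auto
  show "integrable lborel (\<lambda>s. indicator {a..b} s * (1 / s))"
    using borel_integrable_atLeastAtMost'[OF cont] unfolding set_integrable_def by simp
  have "(ln has_vector_derivative 1 / s) (at s within {a..b})" if "a \<le> s" for s
    unfolding has_real_derivative_iff_has_vector_derivative[symmetric]
    using that assms by (intro has_field_derivative_at_within[OF DERIV_ln_divide]) linarith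
  from integral_FTC_atLeastAtMost[OF assms(2) this cont]
  show "integral\<^sup>L lborel (\<lambda>s. indicator {a..b} s * (1 / s)) = ln b - ln a"
    by simp
qed

lemma indicator_PiE_mult_inverse_prod:
  fixes t :: "'i \<Rightarrow> real"
  assumes "t \<in> extensional I" "finite I"
  shows "indicator (PiE I (\<lambda>_. A)) t * (1 / (\<Prod>i\<in>I. t i))
         = (\<Prod>i\<in>I. indicator A (t i) * (1 / t i))"
proof -
  have ind: "(\<Prod>i\<in>I. indicator A (t i) :: real) = indicator (PiE I (\<lambda>_. A)) t"
  proof (cases "t \<in> PiE I (\<lambda>_. A)")
    case True
    then show ?thesis by (auto simp: indicator_def PiE_iff intro!: prod.neutral)
  next
    case False
    then obtain i where "i \<in> I" "t i \<notin> A"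
      using assms(1) by (auto simp: PiE_iff)
    with assms(2) have "(\<Prod>i\<in>I. indicator A (t i) :: real) = 0"
      by (intro prod_zero bexI[of _ i]) auto
    then show ?thesis
      using False by simp
  qed
  have "(\<Prod>i\<in>I. indicator A (t i) * (1 / t i))
      = (\<Prod>i\<in>I. indicator A (t i)) * (\<Prod>i\<in>I. 1 / t i)"
    by (rule prod.distrib)
  also have "(\<Prod>i\<in>I. 1 / t i) = 1 / (\<Prod>i\<in>I. t i)"
    by (simp add: prod_dividef)
  finally show ?thesis
    using ind by simp
qed

lemma
  fixes a b :: real
  assumes "0 < a" "a \<le> b" "finite I"
  shows integrable_inverse_prod_box:
      "integrable (PiM I (\<lambda>_. lborel))
         (\<lambda>t. indicator (PiE I (\<lambda>_. {a..b})) t * (1 / (\<Prod>i\<in>I. t i)))"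
    and integral_inverse_prod_box:
      "integral\<^sup>L (PiM I (\<lambda>_. lborel))
         (\<lambda>t. indicator (PiE I (\<lambda>_. {a..b})) t * (1 / (\<Prod>i\<in>I. t i))) = (ln b - ln a) ^ card I"
proof -
  interpret product_sigma_finite "\<lambda>_. lborel :: real measure" by standard
  let ?g = "\<lambda>s::real. indicator {a..b} s * (1 / s)"
  let ?F = "\<lambda>t. indicator (PiE I (\<lambda>_. {a..b})) t * (1 / (\<Prod>i\<in>I. t i))"
  have eq: "?F t = (\<Prod>i\<in>I. ?g (t i))" if "t \<in> space (PiM I (\<lambda>_. lborel))" for t
    using that assms(3) indicator_PiE_mult_inverse_prod[of t I "{a..b}"] by (simp add: space_PiM PiE_def)
  have "integrable (PiM I (\<lambda>_. lborel)) (\<lambda>t. \<Prod>i\<in>I. ?g (t i))"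
    using assms integral_inverse_interval(1) by (intro product_integrable_prod) auto
  moreover have "integrable (PiM I (\<lambda>_. lborel)) ?F
      \<longleftrightarrow> integrable (PiM I (\<lambda>_. lborel)) (\<lambda>t. \<Prod>i\<in>I. ?g (t i))"
    by (rule Bochner_Integration.integrable_cong[OF refl]) (rule eq)
  ultimately show "integrable (PiM I (\<lambda>_. lborel)) ?F" by blast
  have "integral\<^sup>L (PiM I (\<lambda>_. lborel)) ?F
      = integral\<^sup>L (PiM I (\<lambda>_. lborel)) (\<lambda>t. \<Prod>i\<in>I. ?g (t i))"
    by (rule Bochner_Integration.integral_cong[OF refl]) (rule eq)
  also have "\<dots> = (\<Prod>i\<in>I. integral\<^sup>L lborel ?g)"
    using assms integral_inverse_interval(1) by (intro product_integral_prod) auto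
  also have "\<dots> = (ln b - ln a) ^ card I"
    using assms integral_inverse_interval(2) by simp
  finally show "integral\<^sup>L (PiM I (\<lambda>_. lborel)) ?F = (ln b - ln a) ^ card I" .
qed

lemma prod_box_bounds:
  fixes t :: "'i \<Rightarrow> real"
  assumes "1 \<le> c" "t \<in> PiE I (\<lambda>_. {1..c})"
  shows "1 \<le> (\<Prod>i\<in>I. t i)" "(\<Prod>i\<in>I. t i) \<le> c ^ card I"
proof -
  show "1 \<le> (\<Prod>i\<in>I. t i)"
    using assms by (intro prod_ge_1) (auto simp: PiE_iff)
  have "(\<Prod>i\<in>I. t i) \<le> (\<Prod>i\<in>I. c)"
    using assms by (intro prod_mono) (auto simp: PiE_iff)
  then show "(\<Prod>i\<in>I. t i) \<le> c ^ card I" by simp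
qed

lemma steklov_node_bounds:
  fixes t :: "nat \<Rightarrow> real" and k :: real
  assumes "0 < w" "t \<in> PiE {..<r} (\<lambda>_. {1..exp (1 / w)})" "1 \<le> m" "m \<le> r"
  shows "exp (k / w) \<le> exp (k / w) * (\<Prod>i<r. t i) powr (real m / real r)"
    and "exp (k / w) * (\<Prod>i<r. t i) powr (real m / real r) \<le> exp ((k + real r) / w)"
proof -
  have lower: "1 \<le> (\<Prod>i<r. t i)" and upper: "(\<Prod>i<r. t i) \<le> exp (1 / w) ^ r"
    using prod_box_bounds[of "exp (1 / w)" t "{..<r}"] assms by auto
  have "1 \<le> (\<Prod>i<r. t i) powr (real m / real r)"
    using lower by (intro ge_one_powr_ge_zero) auto
  then show "exp (k / w) \<le> exp (k / w) * (\<Prod>i<r. t i) powr (real m / real r)"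
    by simp
  have "(\<Prod>i<r. t i) powr (real m / real r) \<le> (\<Prod>i<r. t i) powr 1"
    using lower assms by (intro powr_mono) auto
  also have "\<dots> \<le> exp (real r / w)"
    using upper lower by (simp add: exp_of_nat_mult[symmetric])
  finally show "exp (k / w) * (\<Prod>i<r. t i) powr (real m / real r) \<le> exp ((k + real r) / w)"
    by (simp add: add_divide_distrib exp_add)
qed

definition steklov_coeff :: "nat \<Rightarrow> nat \<Rightarrow> real" where
  "steklov_coeff r m = (-1) powi (1 - int m) * real (r choose m)"

lemma steklov_coeff_altdef: "steklov_coeff r m = - ((-1) ^ m * real (r choose m))"
proof -
  have "(-1::real) powi (1 - int m) = (-1) powi 1 * (-1) powi (- int m)"
    by (subst power_int_add[symmetric]) auto
  also have "\<dots> = - inverse ((-1) ^ m)"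
    by (simp add: power_int_minus)
  also have "inverse ((-1::real) ^ m) = (-1) ^ m"
    by (cases "even m") auto
  finally show ?thesis
    by (simp add: steklov_coeff_def)
qed

lemma sum_steklov_coeff:
  assumes "1 \<le> r"
  shows "(\<Sum>m=1..r. steklov_coeff r m) = 1"
proof -
  have "0 = (\<Sum>m\<le>r. (-1::real) ^ m * real (r choose m))"
    using choose_alternating_sum[of r] assms by simp
  also have "\<dots> = 1 + (\<Sum>m=1..r. (-1::real) ^ m * real (r choose m))"
    by (simp add: atMost_atLeast0 sum.atLeast_Suc_atMost)
  finally show ?thesis
    by (simp add: steklov_coeff_altdef sum_negf)
qed

lemma abs_affine_combination_diff_le:
  fixes c v :: "'i \<Rightarrow> real"
  assumes "(\<Sum>m\<in>A. c m) = 1" "\<And>m. m \<in> A \<Longrightarrow> \<bar>v m - z\<bar> \<le> \<eta>"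
  shows "\<bar>(\<Sum>m\<in>A. c m * v m) - z\<bar> \<le> (\<Sum>m\<in>A. \<bar>c m\<bar>) * \<eta>"
proof -
  have "(\<Sum>m\<in>A. c m * v m) - z = (\<Sum>m\<in>A. c m * v m) - (\<Sum>m\<in>A. c m * z)"
    using assms(1) by (simp flip: sum_distrib_right)
  also have "\<dots> = (\<Sum>m\<in>A. c m * (v m - z))"
    by (simp add: sum_subtractf right_diff_distrib)
  also have "\<bar>\<dots>\<bar> \<le> (\<Sum>m\<in>A. \<bar>c m\<bar> * \<bar>v m - z\<bar>)"
    using sum_abs[of "\<lambda>m. c m * (v m - z)" A] by (simp add: abs_mult)
  also have "\<dots> \<le> (\<Sum>m\<in>A. \<bar>c m\<bar> * \<eta>)"
    using assms(2) by (intro sum_mono mult_left_mono) auto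
  finally show ?thesis
    by (simp add: sum_distrib_right)
qed

lemma integral_deviation_le:
  fixes G H :: "'a \<Rightarrow> real"
  assumes H: "integrable M H" and G: "G \<in> borel_measurable M"
    and dev: "\<And>t. t \<in> space M \<Longrightarrow> \<bar>G t - z * H t\<bar> \<le> c * H t"
  shows "integrable M G"
    and "\<bar>integral\<^sup>L M G - z * integral\<^sup>L M H\<bar> \<le> c * integral\<^sup>L M H"
proof -
  have "H \<in> borel_measurable M" using H by auto
  with G have "(\<lambda>t. G t - z * H t) \<in> borel_measurable M" by measurable
  then have D: "integrable M (\<lambda>t. G t - z * H t)"
  proof (rule Bochner_Integration.integrable_bound[rotated])
    show "integrable M (\<lambda>t. c * H t)" using H by simp
    show "AE t in M. norm (G t - z * H t) \<le> norm (c * H t)"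
      using dev by (intro AE_I2) force
  qed
  have "integrable M (\<lambda>t. (G t - z * H t) + z * H t)"
    using D H by (intro Bochner_Integration.integrable_add) auto
  then show "integrable M G" by simp
  have "\<bar>integral\<^sup>L M G - z * integral\<^sup>L M H\<bar> = \<bar>integral\<^sup>L M (\<lambda>t. G t - z * H t)\<bar>"
    using D H \<open>integrable M G\<close> by simp
  also have "\<dots> \<le> integral\<^sup>L M (\<lambda>t. \<bar>G t - z * H t\<bar>)"
    using integral_norm_bound[of M "\<lambda>t. G t - z * H t"] by simp
  also have "\<dots> \<le> integral\<^sup>L M (\<lambda>t. c * H t)"
    using D H dev by (intro integral_mono) auto
  finally show "\<bar>integral\<^sup>L M G - z * integral\<^sup>L M H\<bar> \<le> c * integral\<^sup>L M H"
    by simp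
qed

lemma locally_integrable_pos_measurable_restrict:
  assumes "locally_integrable_pos f" "0 < a"
  shows "(\<lambda>y. indicator {a..b} y * f y) \<in> borel_measurable borel"
proof (cases "a \<le> b")
  case True
  then have "set_integrable lborel {a..b} f"
    using assms unfolding locally_integrable_pos_def by blast
  then show ?thesis
    unfolding set_integrable_def by simp
qed simp

lemma continuous_on_imp_locally_integrable_pos:
  assumes "continuous_on {0<..} f"
  shows "locally_integrable_pos f"
  unfolding locally_integrable_pos_def
proof (intro allI impI)
  fix a b :: real
  assume "0 < a" "a \<le> b"
  then have "continuous_on {a..b} f"
    by (intro continuous_on_subset[OF assms]) auto
  then show "set_integrable lborel {a..b} f"
    by (rule borel_integrable_atLeastAtMost')
qed

lemma steklov_mean_cong:
  fixes f g :: "real \<Rightarrow> real" and k :: int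
  assumes w: "0 < w"
    and eq: "\<And>y. exp (k / w) \<le> y \<Longrightarrow> y \<le> exp ((k + real r) / w) \<Longrightarrow> f y = g y"
  shows "steklov_mean w r f k = steklov_mean w r g k"
proof -
  let ?B = "PiE {..<r} (\<lambda>_. {1..exp (1 / w)})"
  have node_eq: "f (exp (k / w) * (\<Prod>i<r. t i) powr (real m / real r))
      = g (exp (k / w) * (\<Prod>i<r. t i) powr (real m / real r))"
    if "t \<in> ?B" "m \<in> {1..r}" for t m
    using that steklov_node_bounds[OF w that(1), of m k] by (intro eq) auto
  have "?B \<in> sets (PiM {..<r} (\<lambda>_. lborel :: real measure))"
    by (intro sets_PiM_I_finite) auto
  then show ?thesis
    unfolding steklov_mean_def
    by (subst set_lebesgue_integral_cong) (auto simp: node_eq intro!: sum.cong)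
qed

lemma steklov_mean_deviation_borel:
  fixes f :: "real \<Rightarrow> real" and k :: int
  assumes w: "0 < w" and r: "1 \<le> r" and f: "f \<in> borel_measurable borel"
    and near: "\<And>y. exp (k / w) \<le> y \<Longrightarrow> y \<le> exp ((k + real r) / w) \<Longrightarrow> \<bar>f y - z\<bar> \<le> \<eta>"
  shows "\<bar>steklov_mean w r f k - z\<bar> \<le> (\<Sum>m=1..r. \<bar>steklov_coeff r m\<bar>) * \<eta>"
proof -
  define C where "C = (\<Sum>m=1..r. \<bar>steklov_coeff r m\<bar>)"
  define B where "B = PiE {..<r} (\<lambda>_. {1..exp (1 / w)})"
  define \<mu> where "\<mu> = PiM {..<r} (\<lambda>_. lborel :: real measure)"
  define node where "node m t = exp (k / w) * (\<Prod>i<r. t i) powr (real m / real r)"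
    for m and t :: "nat \<Rightarrow> real"
  define H where "H t = indicator B t * (1 / (\<Prod>i<r. t i))" for t
  define G where "G t = indicator B t * ((\<Sum>m=1..r. steklov_coeff r m * f (node m t)) / (\<Prod>i<r. t i))"
    for t
  have mean: "steklov_mean w r f k = w ^ r * integral\<^sup>L \<mu> G"
    by (simp add: steklov_mean_def set_lebesgue_integral_def G_def[abs_def] node_def
        steklov_coeff_def \<mu>_def B_def)
  have "B \<in> sets \<mu>"
    unfolding B_def \<mu>_def by (intro sets_PiM_I_finite) auto
  with f have "G \<in> borel_measurable \<mu>"
    unfolding G_def node_def \<mu>_def by measurable
  moreover have H_int: "integrable \<mu> H" and H_val: "integral\<^sup>L \<mu> H = (1 / w) ^ r"
    unfolding H_def[abs_def] B_def \<mu>_def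
    using integrable_inverse_prod_box[of 1 "exp (1 / w)" "{..<r}"]
      integral_inverse_prod_box[of 1 "exp (1 / w)" "{..<r}"] w
    by auto
  moreover have "\<bar>G t - z * H t\<bar> \<le> (C * \<eta>) * H t" for t
  proof (cases "t \<in> B")
    case True
    define P where "P = (\<Prod>i<r. t i)"
    have "1 \<le> P"
      using True prod_box_bounds[of "exp (1 / w)" t "{..<r}"] w by (simp add: B_def P_def)
    have "\<bar>(\<Sum>m=1..r. steklov_coeff r m * f (node m t)) - z\<bar> \<le> C * \<eta>"
      unfolding C_def using True steklov_node_bounds[OF w, of t r _ k] near
      by (intro abs_affine_combination_diff_le sum_steklov_coeff r) (auto simp: B_def node_def)
    moreover have "G t - z * H t = ((\<Sum>m=1..r. steklov_coeff r m * f (node m t)) - z) / P"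
      using True by (simp add: G_def H_def P_def diff_divide_distrib)
    ultimately show ?thesis
      using True \<open>1 \<le> P\<close> by (simp add: H_def P_def abs_divide divide_right_mono)
  qed (simp add: G_def H_def)
  ultimately have dev: "\<bar>integral\<^sup>L \<mu> G - z * (1 / w) ^ r\<bar> \<le> C * \<eta> * (1 / w) ^ r"
    using integral_deviation_le(2)[of \<mu> H G z "C * \<eta>"] by simp
  have "steklov_mean w r f k - z = w ^ r * (integral\<^sup>L \<mu> G - z * (1 / w) ^ r)"
    using w by (simp add: mean field_simps)
  also have "\<bar>\<dots>\<bar> \<le> w ^ r * (C * \<eta> * (1 / w) ^ r)"
    using dev w by (simp add: abs_mult mult_left_mono)
  also have "\<dots> = C * \<eta>"
    using w by (simp add: field_simps)
  finally show ?thesis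
    by (simp add: C_def)
qed

lemma steklov_mean_deviation:
  fixes f :: "real \<Rightarrow> real" and k :: int
  assumes w: "0 < w" and r: "1 \<le> r" and f: "locally_integrable_pos f"
    and near: "\<And>y. exp (k / w) \<le> y \<Longrightarrow> y \<le> exp ((k + real r) / w) \<Longrightarrow> \<bar>f y - z\<bar> \<le> \<eta>"
  shows "\<bar>steklov_mean w r f k - z\<bar> \<le> (\<Sum>m=1..r. \<bar>steklov_coeff r m\<bar>) * \<eta>"
proof -
  define F where "F y = indicator {exp (k / w)..exp ((k + real r) / w)} y * f y" for y
  have "steklov_mean w r f k = steklov_mean w r F k"
    using w by (rule steklov_mean_cong) (simp add: F_def)
  also have "\<bar>\<dots> - z\<bar> \<le> (\<Sum>m=1..r. \<bar>steklov_coeff r m\<bar>) * \<eta>"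
  proof (rule steklov_mean_deviation_borel[OF w r])
    show "F \<in> borel_measurable borel"
      unfolding F_def[abs_def] using f by (intro locally_integrable_pos_measurable_restrict) auto
  qed (simp add: F_def near)
  finally show ?thesis .
qed

lemma abs_infsum_weighted_diff_le:
  fixes a s :: "'i \<Rightarrow> real"
  assumes a: "(a has_sum 1) UNIV" and a_abs: "(\<lambda>k. \<bar>a k\<bar>) summable_on UNIV"
    and bound: "\<And>k. \<bar>s k - z\<bar> \<le> B" and near: "\<And>k. k \<notin> S \<Longrightarrow> \<bar>s k - z\<bar> \<le> \<eta>"
    and "0 \<le> \<eta>"
  shows "\<bar>infsum (\<lambda>k. a k * s k) UNIV - z\<bar>
           \<le> \<eta> * infsum (\<lambda>k. \<bar>a k\<bar>) UNIV + B * infsum (\<lambda>k. \<bar>a k\<bar>) S"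
proof -
  define h where "h k = a k * (s k - z)" for k
  define b where "b k = \<bar>a k\<bar> * \<eta> + (if k \<in> S then \<bar>a k\<bar> else 0) * B" for k
  have "0 \<le> B"
    using bound by (meson abs_ge_zero order_trans)
  have "(\<lambda>k. if k \<in> S then \<bar>a k\<bar> else 0) summable_on UNIV \<longleftrightarrow> (\<lambda>k. \<bar>a k\<bar>) summable_on S"
    by (rule summable_on_cong_neutral) auto
  then have a_S: "(\<lambda>k. if k \<in> S then \<bar>a k\<bar> else 0) summable_on UNIV"
    using summable_on_subset_banach[OF a_abs, of S] by simp
  have infsum_S: "infsum (\<lambda>k. if k \<in> S then \<bar>a k\<bar> else 0) UNIV = infsum (\<lambda>k. \<bar>a k\<bar>) S"
    by (rule infsum_cong_neutral) auto
  have b: "b summable_on UNIV"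
    unfolding b_def by (intro summable_on_add summable_on_cmult_left a_abs a_S)
  have h_le_b: "norm (h k) \<le> b k" for k
  proof (cases "k \<in> S")
    case True
    then show ?thesis
      using bound[of k] \<open>0 \<le> \<eta>\<close> by (simp add: h_def b_def abs_mult mult_left_mono add_increasing)
  next
    case False
    then show ?thesis
      using near[OF False] by (simp add: h_def b_def abs_mult mult_left_mono)
  qed
  have norm_b: "norm (b k) = b k" for k
    using h_le_b[of k] norm_ge_zero[of "h k"] by simp
  then have "(\<lambda>k. norm (b k)) summable_on UNIV"
    using b by simp
  then have h_abs: "(\<lambda>k. norm (h k)) summable_on UNIV"
    by (rule Infinite_Sum.abs_summable_on_comparison_test) (metis norm_b h_le_b)
  have "(h has_sum infsum h UNIV) UNIV"
    using abs_summable_summable[OF h_abs] by simp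
  from has_sum_add[OF this has_sum_cmult_left[OF a, of z]]
  have "infsum (\<lambda>k. a k * s k) UNIV = infsum h UNIV + z"
    by (intro infsumI) (simp add: h_def algebra_simps)
  then have "\<bar>infsum (\<lambda>k. a k * s k) UNIV - z\<bar> = norm (infsum h UNIV)"
    by simp
  also have "\<dots> \<le> infsum (\<lambda>k. norm (h k)) UNIV"
    using norm_infsum_bound[OF h_abs] .
  also have "\<dots> \<le> infsum b UNIV"
    using h_abs b h_le_b by (intro infsum_mono) auto
  also have "\<dots> = \<eta> * infsum (\<lambda>k. \<bar>a k\<bar>) UNIV + B * infsum (\<lambda>k. \<bar>a k\<bar>) S"
    unfolding b_def using a_abs a_S
    by (subst infsum_add) (auto intro!: summable_on_cmult_left simp: infsum_cmult_left infsum_S)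
  finally show ?thesis .
qed

lemma ln_dist_le_of_steklov_interval:
  fixes k :: real
  assumes w: "0 < w" and x: "0 < x" and k: "\<bar>k - w * ln x\<bar> \<le> \<gamma>"
    and y: "exp (k / w) \<le> y" "y \<le> exp ((k + d) / w)"
  shows "\<bar>ln y - ln x\<bar> \<le> (\<gamma> + d) / w"
proof -
  have "0 < y"
    using y(1) exp_gt_zero less_le_trans by blast
  then have "k / w \<le> ln y" "ln y \<le> (k + d) / w"
    using y by (metis exp_gt_zero ln_exp ln_le_cancel_iff)+
  then have "k \<le> w * ln y" "w * ln y \<le> k + d"
    using w by (auto simp: field_simps)
  then have "\<bar>w * ln y - w * ln x\<bar> \<le> \<gamma> + d"
    using k by (simp add: abs_le_iff)
  then show ?thesis
    using w by (simp add: le_divide_eq abs_mult mult.commute flip: right_diff_distrib)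
qed

lemma mellin_steklov_deviation:
  fixes K f :: "real \<Rightarrow> real" and \<gamma> :: real
  assumes K_sum: "((\<lambda>k::int. K (exp (- real_of_int k) * x powr w)) has_sum 1) UNIV"
    and K_abs: "(\<lambda>k::int. \<bar>K (exp (- real_of_int k) * x powr w)\<bar>) summable_on UNIV"
    and w: "0 < w" and x: "0 < x" and r: "1 \<le> r" and f: "locally_integrable_pos f"
    and f_bound: "\<And>y. 0 < y \<Longrightarrow> \<bar>f y\<bar> \<le> Mf"
    and f_near: "\<And>y. 0 < y \<Longrightarrow> \<bar>ln y - ln x\<bar> \<le> (\<gamma> + r) / w \<Longrightarrow> \<bar>f y - f x\<bar> \<le> \<epsilon>"
    and "0 \<le> \<epsilon>"
  shows "\<bar>mellin_steklov w r K f x - f x\<bar>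
           \<le> (\<Sum>m=1..r. \<bar>steklov_coeff r m\<bar>)
              * (\<epsilon> * infsum (\<lambda>k::int. \<bar>K (exp (- real_of_int k) * x powr w)\<bar>) UNIV
                 + 2 * Mf * infsum (\<lambda>k::int. \<bar>K (exp (- real_of_int k) * x powr w)\<bar>)
                     {k. \<bar>k - ln (x powr w)\<bar> > \<gamma>})"
proof -
  define C where "C = (\<Sum>m=1..r. \<bar>steklov_coeff r m\<bar>)"
  define S where "S = {k::int. \<bar>k - ln (x powr w)\<bar> > \<gamma>}"
  have C: "0 \<le> C"
    unfolding C_def by (intro sum_nonneg) auto
  have pos: "0 < y" if "exp (k / w) \<le> y" for k y
    using that exp_gt_zero less_le_trans by blast
  have bound: "\<bar>steklov_mean w r f k - f x\<bar> \<le> C * (2 * Mf)" for k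
  proof -
    have "\<bar>f y - f x\<bar> \<le> 2 * Mf" if "0 < y" for y
      using f_bound[OF that] f_bound[OF x] by linarith
    then show ?thesis
      unfolding C_def using pos by (intro steklov_mean_deviation w r f) blast
  qed
  have near: "\<bar>steklov_mean w r f k - f x\<bar> \<le> C * \<epsilon>" if "k \<notin> S" for k
  proof -
    have k: "\<bar>k - w * ln x\<bar> \<le> \<gamma>"
      using that x by (simp add: S_def ln_powr)
    have "\<bar>f y - f x\<bar> \<le> \<epsilon>" if "exp (k / w) \<le> y" "y \<le> exp ((k + real r) / w)" for y
      by (rule f_near[OF pos[OF that(1)] ln_dist_le_of_steklov_interval[OF w x k that]])
    then show ?thesis
      unfolding C_def by (rule steklov_mean_deviation[OF w r f])
  qed
  have "\<bar>mellin_steklov w r K f x - f x\<bar>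
      \<le> C * \<epsilon> * infsum (\<lambda>k::int. \<bar>K (exp (- real_of_int k) * x powr w)\<bar>) UNIV
        + C * (2 * Mf) * infsum (\<lambda>k::int. \<bar>K (exp (- real_of_int k) * x powr w)\<bar>) S"
    unfolding mellin_steklov_def
    using \<open>0 \<le> \<epsilon>\<close> C bound near
    by (intro abs_infsum_weighted_diff_le K_sum K_abs) auto
  then show ?thesis
    by (simp add: C_def S_def algebra_simps)
qed

lemma is_kernel_has_sum:
  assumes "is_kernel K" "0 < u"
  shows "((\<lambda>k::int. K (exp (- real_of_int k) * u)) has_sum 1) UNIV"
  using assms unfolding is_kernel_def by blast

lemma is_kernel_abs_sum_bounded:
  assumes "is_kernel K"
  obtains M0 where "\<And>u. 0 < u \<Longrightarrow> (\<lambda>k::int. \<bar>K (exp (- real_of_int k) * u)\<bar>) summable_on UNIV"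
    and "\<And>u. 0 < u \<Longrightarrow> infsum (\<lambda>k::int. \<bar>K (exp (- real_of_int k) * u)\<bar>) UNIV \<le> M0"
  using assms unfolding is_kernel_def by blast

lemma is_kernel_tail_small:
  assumes "is_kernel K" "0 < \<epsilon>"
  obtains \<gamma> where "\<And>u. 0 < u \<Longrightarrow>
    infsum (\<lambda>k::int. \<bar>K (exp (- real_of_int k) * u)\<bar>) {k. \<bar>real_of_int k - ln u\<bar> > \<gamma>} < \<epsilon>"
proof -
  have "\<forall>\<epsilon>>0. \<exists>\<gamma>0. \<forall>\<gamma>\<ge>\<gamma>0. \<forall>u>0.
      infsum (\<lambda>k::int. \<bar>K (exp (- real_of_int k) * u)\<bar>) {k. \<bar>real_of_int k - ln u\<bar> > \<gamma>} < \<epsilon>"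
    using assms(1) unfolding is_kernel_def by blast
  with assms(2) that show ?thesis
    by (meson order_refl)
qed

lemma mellin_steklov_eventually_close:
  assumes K: "is_kernel K" and r: "1 \<le> r"
    and f_bdd: "bounded_pos f" and f_li: "locally_integrable_pos f" and X: "X \<subseteq> {0<..}"
  obtains M where "\<And>\<epsilon>. 0 < \<epsilon> \<Longrightarrow>
      \<exists>\<delta>>0. \<forall>x\<in>X. \<forall>y>0. \<bar>ln y - ln x\<bar> \<le> \<delta> \<longrightarrow> \<bar>f y - f x\<bar> \<le> \<epsilon> \<Longrightarrow>
      \<forall>\<^sub>F w in at_top. \<forall>x\<in>X. \<bar>mellin_steklov w r K f x - f x\<bar> \<le> M * \<epsilon>"
proof -
  obtain M0 where K_abs: "\<And>u. 0 < u \<Longrightarrow> (\<lambda>k::int. \<bar>K (exp (- real_of_int k) * u)\<bar>) summable_on UNIV"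
    and K_abs_le: "\<And>u. 0 < u \<Longrightarrow> infsum (\<lambda>k::int. \<bar>K (exp (- real_of_int k) * u)\<bar>) UNIV \<le> M0"
    using is_kernel_abs_sum_bounded[OF K] by blast
  obtain Mf where f_bound: "\<And>y. 0 < y \<Longrightarrow> \<bar>f y\<bar> \<le> Mf"
    using f_bdd unfolding bounded_pos_def by blast
  define C where "C = (\<Sum>m=1..r. \<bar>steklov_coeff r m\<bar>)"
  have "0 \<le> Mf"
    using f_bound[of 1] by simp
  have "0 \<le> C"
    unfolding C_def by (intro sum_nonneg) auto
  show ?thesis
  proof (rule that[of "C * (\<bar>M0\<bar> + 2 * Mf)"])
    fix \<epsilon> :: real
    assume "0 < \<epsilon>" and "\<exists>\<delta>>0. \<forall>x\<in>X. \<forall>y>0. \<bar>ln y - ln x\<bar> \<le> \<delta> \<longrightarrow> \<bar>f y - f x\<bar> \<le> \<epsilon>"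
    then obtain \<delta> where "0 < \<delta>" and f_near: "\<forall>x\<in>X. \<forall>y>0. \<bar>ln y - ln x\<bar> \<le> \<delta> \<longrightarrow> \<bar>f y - f x\<bar> \<le> \<epsilon>"
      by blast
    obtain \<gamma> where tail: "\<And>u. 0 < u \<Longrightarrow>
        infsum (\<lambda>k::int. \<bar>K (exp (- real_of_int k) * u)\<bar>) {k. \<bar>real_of_int k - ln u\<bar> > \<gamma>} < \<epsilon>"
      using is_kernel_tail_small[OF K \<open>0 < \<epsilon>\<close>] by blast
    show "\<forall>\<^sub>F w in at_top. \<forall>x\<in>X. \<bar>mellin_steklov w r K f x - f x\<bar> \<le> C * (\<bar>M0\<bar> + 2 * Mf) * \<epsilon>"
      using eventually_ge_at_top[of "max 1 ((\<gamma> + r) / \<delta>)"]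
    proof eventually_elim
      case (elim w)
      then have "0 < w" and "(\<gamma> + r) / w \<le> \<delta>"
        using \<open>0 < \<delta>\<close> by (auto simp: field_simps)
      show ?case
      proof
        fix x
        assume "x \<in> X"
        then have "0 < x" "0 < x powr w"
          using X by auto
        let ?u = "x powr w"
        have "\<bar>mellin_steklov w r K f x - f x\<bar>
            \<le> C * (\<epsilon> * infsum (\<lambda>k::int. \<bar>K (exp (- real_of_int k) * ?u)\<bar>) UNIV
                + 2 * Mf * infsum (\<lambda>k::int. \<bar>K (exp (- real_of_int k) * ?u)\<bar>)
                    {k. \<bar>real_of_int k - ln ?u\<bar> > \<gamma>})"
          unfolding C_def
        proof (rule mellin_steklov_deviation[OF is_kernel_has_sum[OF K \<open>0 < ?u\<close>] K_abs[OF \<open>0 < ?u\<close>]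
              \<open>0 < w\<close> \<open>0 < x\<close> r f_li f_bound])
          show "\<bar>f y - f x\<bar> \<le> \<epsilon>" if "0 < y" "\<bar>ln y - ln x\<bar> \<le> (\<gamma> + r) / w" for y
            using f_near \<open>x \<in> X\<close> that \<open>(\<gamma> + r) / w \<le> \<delta>\<close> by auto
        qed (use \<open>0 < \<epsilon>\<close> in auto)
        also have "\<dots> \<le> C * (\<epsilon> * \<bar>M0\<bar> + 2 * Mf * \<epsilon>)"
          using K_abs_le[OF \<open>0 < ?u\<close>] tail[OF \<open>0 < ?u\<close>] \<open>0 < \<epsilon>\<close> \<open>0 \<le> Mf\<close> \<open>0 \<le> C\<close>
          by (intro mult_left_mono add_mono) auto
        finally show "\<bar>mellin_steklov w r K f x - f x\<bar> \<le> C * (\<bar>M0\<bar> + 2 * Mf) * \<epsilon>"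
          by (simp add: algebra_simps)
      qed
    qed
  qed
qed

lemma uniform_limit_mellin_steklov:
  assumes "is_kernel K" "1 \<le> r" "bounded_pos f" "locally_integrable_pos f" "X \<subseteq> {0<..}"
    and equicont: "\<And>\<epsilon>. 0 < \<epsilon> \<Longrightarrow> \<exists>\<delta>>0. \<forall>x\<in>X. \<forall>y>0. \<bar>ln y - ln x\<bar> \<le> \<delta> \<longrightarrow> \<bar>f y - f x\<bar> \<le> \<epsilon>"
  shows "uniform_limit X (\<lambda>w. mellin_steklov w r K f) f at_top"
proof (rule uniform_limitI)
  fix e :: real
  assume "0 < e"
  obtain M where M: "\<And>\<epsilon>. 0 < \<epsilon> \<Longrightarrow>
      \<exists>\<delta>>0. \<forall>x\<in>X. \<forall>y>0. \<bar>ln y - ln x\<bar> \<le> \<delta> \<longrightarrow> \<bar>f y - f x\<bar> \<le> \<epsilon> \<Longrightarrow>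
      \<forall>\<^sub>F w in at_top. \<forall>x\<in>X. \<bar>mellin_steklov w r K f x - f x\<bar> \<le> M * \<epsilon>"
    using mellin_steklov_eventually_close[OF assms(1-5)] by blast
  define \<epsilon> where "\<epsilon> = e / (\<bar>M\<bar> + 1)"
  have "0 < \<epsilon>" and "\<bar>M\<bar> * \<epsilon> < e"
    using \<open>0 < e\<close> by (simp_all add: \<epsilon>_def field_simps add_pos_nonneg)
  then have "M * \<epsilon> < e"
    using abs_ge_self[of M] by (meson le_less_trans less_imp_le mult_right_mono)
  from M[OF \<open>0 < \<epsilon>\<close> equicont[OF \<open>0 < \<epsilon>\<close>]]
  show "\<forall>\<^sub>F w in at_top. \<forall>x\<in>X. dist (mellin_steklov w r K f x) (f x) < e"
    by eventually_elim (use \<open>M * \<epsilon> < e\<close> in \<open>auto simp: dist_real_def\<close>)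
qed

lemma uniform_limit_imp_SUP_dist_tendsto_zero:
  fixes g :: "'b \<Rightarrow> 'a \<Rightarrow> 'c::metric_space"
  assumes "uniform_limit X g l F" "X \<noteq> {}"
  shows "((\<lambda>n. SUP x\<in>X. dist (g n x) (l x)) \<longlongrightarrow> 0) F"
proof (rule tendstoI)
  fix e :: real
  assume "0 < e"
  with assms(1) have "\<forall>\<^sub>F n in F. \<forall>x\<in>X. dist (g n x) (l x) < e / 2"
    by (intro uniform_limitD) auto
  then show "\<forall>\<^sub>F n in F. dist (SUP x\<in>X. dist (g n x) (l x)) 0 < e"
  proof eventually_elim
    case (elim n)
    obtain x0 where "x0 \<in> X"
      using assms(2) by blast
    have "bdd_above ((\<lambda>x. dist (g n x) (l x)) ` X)"
      using elim by (intro bdd_aboveI[of _ "e / 2"]) force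
    then have "0 \<le> (SUP x\<in>X. dist (g n x) (l x))"
      using cSUP_upper[OF \<open>x0 \<in> X\<close>] zero_le_dist order_trans by blast
    moreover have "(SUP x\<in>X. dist (g n x) (l x)) \<le> e / 2"
      using elim assms(2) by (intro cSUP_least) auto
    ultimately show ?case
      using \<open>0 < e\<close> by simp
  qed
qed

lemma isCont_imp_ln_eps_delta:
  fixes f :: "real \<Rightarrow> real"
  assumes "0 < x" "isCont f x" "0 < \<epsilon>"
  shows "\<exists>\<delta>>0. \<forall>y>0. \<bar>ln y - ln x\<bar> \<le> \<delta> \<longrightarrow> \<bar>f y - f x\<bar> \<le> \<epsilon>"
proof -
  have "isCont (\<lambda>u. f (exp u)) (ln x)"
    using assms by (intro isCont_o2[where f = exp and g = f]) auto
  then obtain d where "0 < d" and d: "\<And>u. \<bar>u - ln x\<bar> < d \<Longrightarrow> \<bar>f (exp u) - f x\<bar> < \<epsilon>"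
    using assms unfolding continuous_at_eps_delta dist_real_def by force
  have "\<bar>f y - f x\<bar> \<le> \<epsilon>" if "0 < y" "\<bar>ln y - ln x\<bar> \<le> d / 2" for y
    using d[of "ln y"] that \<open>0 < d\<close> by simp
  then show ?thesis
    using \<open>0 < d\<close> by (intro exI[of _ "d / 2"]) auto
qed

lemma log_uniformly_continuous_imp_ln_eps_delta:
  assumes "log_uniformly_continuous f" "0 < \<epsilon>"
  shows "\<exists>\<delta>>0. \<forall>x\<in>{0<..}. \<forall>y>0. \<bar>ln y - ln x\<bar> \<le> \<delta> \<longrightarrow> \<bar>f y - f x\<bar> \<le> \<epsilon>"
proof -
  obtain \<delta> where "0 < \<delta>" "\<forall>u>0. \<forall>v>0. \<bar>ln u - ln v\<bar> \<le> \<delta> \<longrightarrow> \<bar>f u - f v\<bar> < \<epsilon>"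
    using assms unfolding log_uniformly_continuous_def by blast
  then show ?thesis
    by (meson greaterThan_iff less_imp_le)
qed

theorem theorem1:
  fixes K :: "real \<Rightarrow> real" and r :: nat
  assumes "is_kernel K" and "r \<ge> 1"
  shows "(\<forall>f x. bounded_pos f \<and> locally_integrable_pos f \<and> x > 0 \<and> isCont f x \<longrightarrow>
            ((\<lambda>w. mellin_steklov w r K f x) \<longlongrightarrow> f x) at_top)
       \<and> (\<forall>f. f \<in> C_pos \<longrightarrow>
            ((\<lambda>w. SUP x\<in>{0<..}. \<bar>mellin_steklov w r K f x - f x\<bar>) \<longlongrightarrow> 0) at_top)"
proof (intro conjI allI impI)
  fix f :: "real \<Rightarrow> real" and x :: real
  assume f: "bounded_pos f \<and> locally_integrable_pos f \<and> x > 0 \<and> isCont f x"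
  then have "uniform_limit {x} (\<lambda>w. mellin_steklov w r K f) f at_top"
    by (intro uniform_limit_mellin_steklov assms) (auto dest: isCont_imp_ln_eps_delta)
  then show "((\<lambda>w. mellin_steklov w r K f x) \<longlongrightarrow> f x) at_top"
    by simp
next
  fix f :: "real \<Rightarrow> real"
  assume "f \<in> C_pos"
  then have "bounded_pos f" "continuous_on {0<..} f" "log_uniformly_continuous f"
    unfolding C_pos_def by auto
  then have "uniform_limit {0<..} (\<lambda>w. mellin_steklov w r K f) f at_top"
    by (intro uniform_limit_mellin_steklov assms continuous_on_imp_locally_integrable_pos
        log_uniformly_continuous_imp_ln_eps_delta) auto
  from uniform_limit_imp_SUP_dist_tendsto_zero[OF this]
  show "((\<lambda>w. SUP x\<in>{0<..}. \<bar>mellin_steklov w r K f x - f x\<bar>) \<longlongrightarrow> 0) at_top"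
    by (simp add: dist_real_def)
qed

end
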